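(* Let $\mathcal{T}=(T_n)_{n\in\mathbb{N}}$ be a scale with sequence of factors $(\kappa_n)_{n\in\mathbb{N}}$. Then there is a rational $\mathcal{T}$-sparsely long tail $R_\infty\subset\mathbb{N}$ with $0<d(R_\infty)<1$.
   Context: A scale is a sequence of positive integers $\mathcal{T}=(T_n)_{n\in\mathbb{N}}$ together with a sequence of integers (factors) $(\kappa_n)_{n\in\mathbb{N}}$ such that $\kappa_0=3$, $\kappa_n$ is a multiple of $3\kappa_{n-1}$ for $n\ge1$, $T_0$ is a multiple of $3$, $T_n=\kappa_nT_{n-1}$ for $n\ge1$, and $\kappa_{n+1}/\kappa_n\to\infty$. An $\mathbb{N}$-interval is $[a,b]_{\mathbb{N}}=[a,b]\cap\mathbb{N}$. A component of $\mathbb{M}\subset\mathbb{N}$ is a maximal $\mathbb{N}$-interval contained in $\mathbb{M}$. For $T\ge1$, a $T$-regular interval is $[kT,(k+1)T-1]_{\mathbb{N}}$ for some $k\ge0$. $R_\infty\subset\mathbb{N}$ is $\mathcal{T}$-adapted if each component of $R_\infty$ is a $T_n$-regular interval for some $n$; its $n$-skeleton $R_n$ is the union of the components of $R_\infty$ that are $T_k$-regular for some $k\ge n$. $R_\infty$ is a $\mathcal{T}$-sparsely long tail if: (1) it is $\mathcal{T}$-adapted; (2) $0\notin R_\infty$; (3) for every $n\ge1$ and every $T_n$-regular interval $I=[a,b]_{\mathbb{N}}$ not contained in $R_\infty$ (equivalently not contained in $R_n$), one has $I\cap R_{n-1}\subset[a+T_n/3,\,b-T_n/3]_{\mathbb{N}}$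 and $0<\#(R_{n-1}\cap I)/T_n\le1/\kappa_n$. For $A\subset\mathbb{Z}$, $\bar d(A)=\limsup_{N}\frac1N\#(A\cap[0,N-1])$, $d(A)$ the density when $\limsup=\liminf$. An arithmetic progression is $a\mathbb{Z}+b$ ($a,b\in\mathbb{N}$, $a\ne0$); $A\subset\mathbb{Z}$ is rational if for every $\varepsilon>0$ there is a finite union $B$ of arithmetic progressions with $\bar d(A\triangle B)<\varepsilon$; $A\subset\mathbb{N}$ is rational if $A=C\cap\mathbb{N}$ for a rational $C\subset\mathbb{Z}$. A rational $\mathcal{T}$-sparsely long tail is a set that is both. *)

theory Defs
  imports Complex_Main "HOL-Library.Extended_Real"
begin

definition scale :: "(nat \<Rightarrow> nat) \<Rightarrow> (nat \<Rightarrow> nat) \<Rightarrow> bool" where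
  "scale T \<kappa> \<longleftrightarrow>
     (\<forall>n. T n > 0) \<and> \<kappa> 0 = 3 \<and> (\<forall>n\<ge>1. (3 * \<kappa> (n - 1)) dvd \<kappa> n) \<and>
     3 dvd T 0 \<and> (\<forall>n\<ge>1. T n = \<kappa> n * T (n - 1)) \<and>
     filterlim (\<lambda>n. real (\<kappa> (Suc n)) / real (\<kappa> n)) at_top sequentially"

definition reg_interval :: "nat \<Rightarrow> nat \<Rightarrow> nat set" where
  "reg_interval T k = {k * T .. (k + 1) * T - 1}"

definition regular :: "nat \<Rightarrow> nat set \<Rightarrow> bool" where
  "regular T I \<longleftrightarrow> (\<exists>k. I = reg_interval T k)"

definition component :: "nat set \<Rightarrow> nat set \<Rightarrow> bool" where
  "component M I \<longleftrightarrow> (\<exists>a b. a \<le> b \<and> I = {a..b} \<and> I \<subseteq> M \<and>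
      (a = 0 \<or> a - 1 \<notin> M) \<and> b + 1 \<notin> M)"

definition adapted :: "(nat \<Rightarrow> nat) \<Rightarrow> nat set \<Rightarrow> bool" where
  "adapted T R \<longleftrightarrow> (\<forall>x\<in>R. \<exists>I. x \<in> I \<and> component R I) \<and>
      (\<forall>I. component R I \<longrightarrow> (\<exists>n. regular (T n) I))"

definition skeleton :: "(nat \<Rightarrow> nat) \<Rightarrow> nat set \<Rightarrow> nat \<Rightarrow> nat set" where
  "skeleton T R n = \<Union>{I. component R I \<and> (\<exists>k\<ge>n. regular (T k) I)}"

definition sparsely_long_tail :: "(nat \<Rightarrow> nat) \<Rightarrow> (nat \<Rightarrow> nat) \<Rightarrow> nat set \<Rightarrow> bool" where
  "sparsely_long_tail T \<kappa> R \<longleftrightarrow> adapted T R \<and> 0 \<notin> R \<and>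
     (\<forall>n\<ge>1. \<forall>k. let I = reg_interval (T n) k; a = k * T n; b = (k + 1) * T n - 1 in
        \<not> I \<subseteq> R \<longrightarrow>
          I \<inter> skeleton T R (n - 1) \<subseteq> {a + T n div 3 .. b - T n div 3} \<and>
          0 < real (card (skeleton T R (n - 1) \<inter> I)) / real (T n) \<and>
          real (card (skeleton T R (n - 1) \<inter> I)) / real (T n) \<le> 1 / real (\<kappa> n))"

definition upper_density :: "int set \<Rightarrow> ereal" where
  "upper_density A = limsup (\<lambda>N. ereal (real (card (A \<inter> {0..<int N})) / real N))"

definition has_density :: "nat set \<Rightarrow> real \<Rightarrow> bool" where
  "has_density A \<delta> \<longleftrightarrow> (\<lambda>N. real (card (A \<inter> {..<N})) / real N) \<longlonglongrightarrow> \<delta>"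

definition arith_prog :: "nat \<Rightarrow> nat \<Rightarrow> int set" where
  "arith_prog a b = {int a * m + int b | m. True}"

definition finite_union_APs :: "int set \<Rightarrow> bool" where
  "finite_union_APs B \<longleftrightarrow> (\<exists>F. finite F \<and> (\<forall>(a, b)\<in>F. a \<noteq> 0) \<and>
      B = (\<Union>(a, b)\<in>F. arith_prog a b))"

definition rational_int :: "int set \<Rightarrow> bool" where
  "rational_int A \<longleftrightarrow> (\<forall>\<epsilon>>0. \<exists>B. finite_union_APs B \<and>
      upper_density ((A - B) \<union> (B - A)) < ereal \<epsilon>)"

definition rational_nat :: "nat set \<Rightarrow> bool" where
  "rational_nat A \<longleftrightarrow> (\<exists>C. rational_int C \<and> A = {n. int n \<in> C})"

end

theory Submission
  imports Defs
begin

text \<open>Read x in the mixed radix of the scale: its n-th digit is (x div T n) mod \<kappa> (n + 1).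
  The tail consists of all x having the middle digit \<kappa> (n + 1) / 3 at some position n, so its
  n-th layer is the middle T n-block of every T (n + 1)-block. The component of x is the T n-block
  of x for the highest such position n, and a T (n + 1)-block not contained in the tail meets the
  n-skeleton exactly in its middle T n-block, which gives the sparsity conditions. Layer n has
  density 1 / \<kappa> (n + 1) \<le> 3 ^ -(n + 2), so the union of the first N layers, a T N-periodic set,
  approximates the tail up to 3 ^ -N on every initial segment. This yields rationality and the
  existence of the density, which lies between 1 / \<kappa> 1 and 2 / 3.\<close>

lemma mem_reg_interval_iff:
  assumes "0 < P"
  shows "y \<in> reg_interval P i \<longleftrightarrow> y div P = i"
proof
  assume "y \<in> reg_interval P i"
  then have "i * P \<le> y" "y < (i + 1) * P"
    using assms unfolding reg_interval_def by auto
  then show "y div P = i" by (intro div_nat_eqI) (auto simp: mult.commute)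
next
  assume "y div P = i"
  then have "y = i * P + y mod P" using div_mult_mod_eq[of y P] by simp
  moreover have "y mod P < P" using assms by simp
  ultimately show "y \<in> reg_interval P i"
    unfolding reg_interval_def by (auto simp: algebra_simps)
qed

lemma card_reg_interval: "0 < P \<Longrightarrow> card (reg_interval P i) = P"
  unfolding reg_interval_def by (simp add: algebra_simps)

lemma component_unique:
  assumes "component M I" "component M J" "x \<in> I" "x \<in> J"
  shows "I = J"
proof -
  have ends: "b \<le> d \<and> c \<le> a"
    if "{a..b} \<subseteq> M" "d + 1 \<notin> M" "c = 0 \<or> c - 1 \<notin> M" "x \<in> {a..b}" "x \<in> {c..d}" for a b c d
  proof (intro conjI; rule ccontr)
    assume "\<not> b \<le> d"
    then have "d + 1 \<in> {a..b}" using that by auto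
    with that(1,2) show False by blast
  next
    assume "\<not> c \<le> a"
    then have "c - 1 \<in> {a..b}" "c \<noteq> 0" using that by auto
    with that(1,3) show False by blast
  qed
  obtain a b where I: "I = {a..b}" "I \<subseteq> M" "a = 0 \<or> a - 1 \<notin> M" "b + 1 \<notin> M"
    using assms(1) unfolding component_def by blast
  obtain c d where J: "J = {c..d}" "J \<subseteq> M" "c = 0 \<or> c - 1 \<notin> M" "d + 1 \<notin> M"
    using assms(2) unfolding component_def by blast
  show ?thesis
    using ends[of a b d c] ends[of c d b a] I J assms(3,4) by (simp add: le_antisym)
qed

lemma Suc_div_mod_eq:
  fixes j K :: nat
  assumes "Suc (j mod K) < K"
  shows "Suc j div K = j div K" "Suc j mod K = Suc (j mod K)"
  using assms by (simp_all add: mod_Suc div_Suc)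

lemma pred_div_mod_eq:
  fixes j K :: nat
  assumes "0 < j mod K"
  shows "(j - 1) div K = j div K" "(j - 1) mod K = j mod K - 1"
proof -
  obtain i where j: "j = Suc i" using assms by (cases j) auto
  have "Suc (i mod K) \<noteq> K"
    using assms unfolding j by (auto simp: mod_Suc)
  then show "(j - 1) div K = j div K" "(j - 1) mod K = j mod K - 1"
    unfolding j by (simp_all add: mod_Suc div_Suc)
qed

lemma pred_mod_of_dvd:
  fixes a P :: nat
  assumes "0 < a" "P dvd a"
  shows "(a - 1) mod P = P - 1"
proof -
  obtain k where "a = P * Suc k"
    using assms by (metis dvdE not0_implies_Suc mult_0_right less_irrefl)
  then have eq: "a - 1 = (P - 1) + k * P" using assms(1) by (cases P) auto
  have "0 < P" using \<open>a = P * Suc k\<close> assms(1) by (cases P) auto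
  have "((P - 1) + k * P) mod P = (P - 1) mod P" by (rule mod_mult_self1)
  also have "\<dots> = P - 1" using \<open>0 < P\<close> by simp
  finally show ?thesis unfolding eq .
qed

lemma pred_mult_div:
  fixes t K :: nat
  assumes "0 < t" "0 < K"
  shows "(t * K - 1) div t = K - 1"
proof -
  have eq: "t * K - 1 = (t - 1) + (K - 1) * t" using assms by (cases K) (auto simp: algebra_simps)
  have "((t - 1) + (K - 1) * t) div t = (K - 1) + (t - 1) div t"
    using assms by (intro div_mult_self1) simp
  also have "(t - 1) div t = 0" using assms by simp
  finally show ?thesis unfolding eq by simp
qed

lemma div_mod_eq_iff:
  fixes q K r k :: nat
  assumes "r < K"
  shows "q div K = k \<and> q mod K = r \<longleftrightarrow> q = k * K + r"
proof
  assume "q div K = k \<and> q mod K = r"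
  then show "q = k * K + r" by (metis div_mult_mod_eq)
next
  assume "q = k * K + r"
  then show "q div K = k \<and> q mod K = r" using assms by simp
qed

lemma card_periodic_Int_lessThan_mult:
  assumes periodic: "\<And>x. x \<in> A \<longleftrightarrow> x mod P \<in> A"
  shows "card (A \<inter> {..<q * P}) = q * card (A \<inter> {..<P})"
proof (induction q)
  case (Suc q)
  have shift_mem: "x + q * P \<in> A \<longleftrightarrow> x \<in> A" for x
    using periodic[of "x + q * P"] periodic[of x] by simp
  have shift: "(\<lambda>x. x + q * P) ` (A \<inter> {..<P}) = A \<inter> {q * P..<q * P + P}"
  proof (intro equalityI subsetI)
    fix y assume "y \<in> A \<inter> {q * P..<q * P + P}"
    then have "y = (y - q * P) + q * P" "y - q * P \<in> A \<inter> {..<P}"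
      using shift_mem[of "y - q * P"] by auto
    then show "y \<in> (\<lambda>x. x + q * P) ` (A \<inter> {..<P})" by (rule image_eqI)
  qed (use shift_mem in auto)
  have "A \<inter> {..<Suc q * P} = (A \<inter> {..<q * P}) \<union> (A \<inter> {q * P..<q * P + P})" by auto
  then have "card (A \<inter> {..<Suc q * P}) = card (A \<inter> {..<q * P}) + card (A \<inter> {q * P..<q * P + P})"
    by (simp add: card_Un_disjoint disjoint_iff)
  also have "card (A \<inter> {q * P..<q * P + P}) = card (A \<inter> {..<P})"
    by (simp flip: shift add: card_image inj_on_def)
  finally show ?case using Suc by simp
qed simp

lemma card_periodic_Int_lessThan_deviation:
  fixes P M :: nat
  assumes "0 < P" and periodic: "\<And>x. x \<in> A \<longleftrightarrow> x mod P \<in> A"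
  shows "\<bar>real (card (A \<inter> {..<M})) * P - real M * card (A \<inter> {..<P})\<bar> \<le> real (card (A \<inter> {..<P})) * P"
proof -
  define p where "p = card (A \<inter> {..<P})"
  define q where "q = M div P"
  have qP: "q * P \<le> M" "M \<le> q * P + P"
    using div_mult_mod_eq[of M P] mod_less_divisor[OF \<open>0 < P\<close>, of M] unfolding q_def by linarith+
  have lower: "q * p \<le> card (A \<inter> {..<M})"
    using card_periodic_Int_lessThan_mult[OF periodic, of q] qP(1) unfolding p_def
    by (metis Int_mono card_mono finite_Int finite_lessThan lessThan_subset_iff order_refl)
  have upper: "card (A \<inter> {..<M}) \<le> q * p + p"
    using card_periodic_Int_lessThan_mult[OF periodic, of "Suc q"] qP(2) unfolding p_def
    by (metis Int_mono add.commute card_mono finite_Int finite_lessThan lessThan_subset_iff mult_Suc order_refl)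
  have "card (A \<inter> {..<M}) * P \<le> (q * P) * p + p * P"
    using mult_le_mono1[OF upper, of P] by (simp add: algebra_simps)
  also have "\<dots> \<le> M * p + p * P" using qP(1) by simp
  finally have up: "card (A \<inter> {..<M}) * P \<le> M * p + p * P" .
  have "M * p \<le> (q * P) * p + p * P" using mult_le_mono1[OF qP(2), of p] by (simp add: algebra_simps)
  also have "\<dots> \<le> card (A \<inter> {..<M}) * P + p * P"
    using mult_le_mono1[OF lower, of P] by (simp add: algebra_simps)
  finally have low: "M * p \<le> card (A \<inter> {..<M}) * P + p * P" .
  from up low show ?thesis
    unfolding abs_le_iff p_def[symmetric] by (simp_all flip: of_nat_mult of_nat_add of_nat_le_iff)
qed

lemma has_density_periodic:
  assumes "0 < P" and periodic: "\<And>x. x \<in> A \<longleftrightarrow> x mod P \<in> A"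
  shows "has_density A (card (A \<inter> {..<P}) / P)"
proof -
  define p where "p = card (A \<inter> {..<P})"
  have bound: "\<bar>card (A \<inter> {..<M}) / M - p / P\<bar> \<le> p / M" if "0 < M" for M :: nat
  proof -
    have "\<bar>real (card (A \<inter> {..<M})) * P - real M * p\<bar> / (M * P) \<le> real p * P / (M * P)"
      using card_periodic_Int_lessThan_deviation[OF assms, of M] unfolding p_def
      by (rule divide_right_mono) simp
    moreover have "card (A \<inter> {..<M}) / M - p / P = (real (card (A \<inter> {..<M})) * P - real M * p) / (M * P)"
      using that \<open>0 < P\<close> by (simp add: field_simps)
    ultimately show ?thesis
      using that \<open>0 < P\<close> by (simp add: abs_divide)
  qed
  have "eventually (\<lambda>M. norm (card (A \<inter> {..<M}) / M - p / P) \<le> norm (p / M) * 1) sequentially"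
    using eventually_gt_at_top[of "0::nat"] by (rule eventually_mono) (use bound in auto)
  then have "(\<lambda>M. card (A \<inter> {..<M}) / M - p / P) \<longlonglongrightarrow> 0"
    by (rule tendsto_0_le[OF lim_const_over_n])
  then show ?thesis
    unfolding has_density_def p_def by (rule LIM_zero_cancel)
qed

lemma card_Int_lessThan_diff_le:
  fixes M :: nat
  shows "\<bar>real (card (A \<inter> {..<M})) - card (B \<inter> {..<M})\<bar> \<le> card (((A - B) \<union> (B - A)) \<inter> {..<M})"
proof -
  have "card (X \<inter> {..<M}) \<le> card (Y \<inter> {..<M}) + card (((A - B) \<union> (B - A)) \<inter> {..<M})"
    if "X - Y \<subseteq> (A - B) \<union> (B - A)" for X Y
  proof -
    have "card (X \<inter> {..<M}) \<le> card ((Y \<inter> {..<M}) \<union> (((A - B) \<union> (B - A)) \<inter> {..<M}))"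
      using that by (intro card_mono) auto
    also have "\<dots> \<le> card (Y \<inter> {..<M}) + card (((A - B) \<union> (B - A)) \<inter> {..<M})"
      by (rule card_Un_le)
    finally show ?thesis .
  qed
  from this[of A B] this[of B A] show ?thesis
    unfolding abs_le_iff by (simp add: Un_commute flip: of_nat_add)
qed

definition periodically_approximable :: "nat set \<Rightarrow> bool" where
  "periodically_approximable A \<longleftrightarrow> (\<forall>\<epsilon>>0. \<exists>P B. 0 < P \<and> (\<forall>x. x \<in> B \<longleftrightarrow> x mod P \<in> B) \<and>
      (\<forall>M. real (card (((A - B) \<union> (B - A)) \<inter> {..<M})) \<le> \<epsilon> * real M))"

lemma has_density_of_periodically_approximable:
  assumes "periodically_approximable A"
  shows "\<exists>\<delta>. has_density A \<delta>"
proof -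
  let ?a = "\<lambda>(A :: nat set) (M :: nat). real (card (A \<inter> {..<M})) / M"
  have "Cauchy (?a A)"
  proof (rule CauchyI)
    fix \<epsilon> :: real assume "0 < \<epsilon>"
    then obtain P B where "0 < P" and periodic: "\<forall>x. x \<in> B \<longleftrightarrow> x mod P \<in> B"
      and close: "\<And>M. real (card (((A - B) \<union> (B - A)) \<inter> {..<M})) \<le> \<epsilon> / 3 * M"
      using assms \<open>0 < \<epsilon>\<close> unfolding periodically_approximable_def
      by (metis divide_pos_pos zero_less_numeral)
    have close_a: "\<bar>?a A M - ?a B M\<bar> \<le> \<epsilon> / 3" for M
    proof (cases "M = 0")
      case False
      have "\<bar>real (card (A \<inter> {..<M})) - card (B \<inter> {..<M})\<bar> \<le> \<epsilon> / 3 * M"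
        using card_Int_lessThan_diff_le[of A M B] close[of M] by linarith
      then have "\<bar>real (card (A \<inter> {..<M})) - card (B \<inter> {..<M})\<bar> / M \<le> \<epsilon> / 3"
        using False by (simp add: pos_divide_le_eq)
      then show ?thesis by (simp add: abs_divide flip: diff_divide_distrib)
    qed (use \<open>0 < \<epsilon>\<close> in simp)
    have "Cauchy (?a B)"
      using has_density_periodic[OF \<open>0 < P\<close>] periodic unfolding has_density_def
      by (blast intro: LIMSEQ_imp_Cauchy)
    then obtain M0 where M0: "\<And>m n. m \<ge> M0 \<Longrightarrow> n \<ge> M0 \<Longrightarrow> \<bar>?a B m - ?a B n\<bar> < \<epsilon> / 3"
      using CauchyD[of "?a B" "\<epsilon> / 3"] \<open>0 < \<epsilon>\<close> by auto
    have "\<bar>?a A m - ?a A n\<bar> < \<epsilon>" if "m \<ge> M0" "n \<ge> M0" for m n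
      using close_a[of m] close_a[of n] M0[OF that] unfolding abs_le_iff abs_less_iff by linarith
    then show "\<exists>M0. \<forall>m\<ge>M0. \<forall>n\<ge>M0. norm (?a A m - ?a A n) < \<epsilon>" by auto
  qed
  then show ?thesis
    unfolding has_density_def convergent_def[symmetric] by (rule Cauchy_convergent)
qed

lemma int_mem_arith_progs_iff:
  assumes "0 < P" and periodic: "\<And>x. x \<in> B \<longleftrightarrow> x mod P \<in> B"
  shows "int x \<in> (\<Union>r\<in>B \<inter> {..<P}. arith_prog P r) \<longleftrightarrow> x \<in> B"
proof
  assume "int x \<in> (\<Union>r\<in>B \<inter> {..<P}. arith_prog P r)"
  then obtain r m where "r \<in> B" "r < P" "int x = int P * m + int r"
    unfolding arith_prog_def by auto
  then have "x mod P = r"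
    by (metis mod_mult_self4 mod_less of_nat_eq_iff zmod_int)
  with \<open>r \<in> B\<close> show "x \<in> B" using periodic[of x] by simp
next
  assume "x \<in> B"
  then have "x mod P \<in> B \<inter> {..<P}" using periodic \<open>0 < P\<close> by simp
  moreover have "int x = int P * int (x div P) + int (x mod P)"
    by (metis div_mult_mod_eq of_nat_add of_nat_mult mult.commute)
  ultimately show "int x \<in> (\<Union>r\<in>B \<inter> {..<P}. arith_prog P r)"
    unfolding arith_prog_def by blast
qed

lemma upper_density_le:
  assumes "\<And>M. real (card (D \<inter> {0..<int M})) \<le> c * real M"
  shows "upper_density D \<le> ereal c"
proof -
  have "0 \<le> c" using assms[of 1] by simp
  have "real (card (D \<inter> {0..<int M})) / M \<le> c" for M
    using assms[of M] \<open>0 \<le> c\<close> by (cases "M = 0") (simp_all add: pos_divide_le_eq)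
  then show ?thesis
    unfolding upper_density_def by (intro Limsup_bounded) auto
qed

lemma card_int_sym_diff_le:
  assumes "\<And>x. int x \<in> B' \<longleftrightarrow> x \<in> B"
  shows "card (((int ` A - B') \<union> (B' - int ` A)) \<inter> {0..<int M}) \<le> card (((A - B) \<union> (B - A)) \<inter> {..<M})"
proof -
  have "((int ` A - B') \<union> (B' - int ` A)) \<inter> {0..<int M} \<subseteq> int ` (((A - B) \<union> (B - A)) \<inter> {..<M})"
  proof
    fix z assume z: "z \<in> ((int ` A - B') \<union> (B' - int ` A)) \<inter> {0..<int M}"
    then obtain x where "z = int x" using nonneg_int_cases by auto
    with z assms show "z \<in> int ` (((A - B) \<union> (B - A)) \<inter> {..<M})" by auto
  qed
  then have "card (((int ` A - B') \<union> (B' - int ` A)) \<inter> {0..<int M}) \<le> card (int ` (((A - B) \<union> (B - A)) \<inter> {..<M}))"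
    by (rule card_mono[rotated]) simp
  also have "\<dots> \<le> card (((A - B) \<union> (B - A)) \<inter> {..<M})" by (rule card_image_le) simp
  finally show ?thesis .
qed

lemma rational_nat_of_periodically_approximable:
  assumes "periodically_approximable A"
  shows "rational_nat A"
  unfolding rational_nat_def
proof (intro exI conjI)
  show "A = {n. int n \<in> int ` A}" by auto
  show "rational_int (int ` A)"
    unfolding rational_int_def
  proof (intro allI impI)
    fix \<epsilon> :: real assume "0 < \<epsilon>"
    then obtain P B where "0 < P" and periodic: "\<forall>x. x \<in> B \<longleftrightarrow> x mod P \<in> B"
      and close: "\<And>M. real (card (((A - B) \<union> (B - A)) \<inter> {..<M})) \<le> \<epsilon> / 2 * M"
      using assms \<open>0 < \<epsilon>\<close> unfolding periodically_approximable_def by (metis half_gt_zero)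
    define B' where "B' = (\<Union>r\<in>B \<inter> {..<P}. arith_prog P r)"
    have B': "int x \<in> B' \<longleftrightarrow> x \<in> B" for x
      unfolding B'_def using int_mem_arith_progs_iff[OF \<open>0 < P\<close>] periodic by blast
    have "finite_union_APs B'"
      unfolding finite_union_APs_def B'_def using \<open>0 < P\<close>
      by (intro exI[of _ "(\<lambda>r. (P, r)) ` (B \<inter> {..<P})"]) auto
    moreover
    let ?D = "(int ` A - B') \<union> (B' - int ` A)"
    have "real (card (?D \<inter> {0..<int M})) \<le> \<epsilon> / 2 * M" for M
      using card_int_sym_diff_le[of B' B A M] B' close[of M] of_nat_le_iff by (smt (verit))
    then have "upper_density ?D \<le> ereal (\<epsilon> / 2)" by (rule upper_density_le)
    then have "upper_density ?D < ereal \<epsilon>"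
      using \<open>0 < \<epsilon>\<close> by (simp add: le_less_trans)
    ultimately show "\<exists>B. finite_union_APs B \<and> upper_density ((int ` A - B) \<union> (B - int ` A)) < ereal \<epsilon>"
      by blast
  qed
qed

lemma sum_third_powers_le: "(\<Sum>n\<in>{N..<M}. (1/3::real) ^ n) \<le> 3/2 * (1/3) ^ N"
proof (cases "N \<le> M")
  case True
  have "(\<Sum>n\<in>{N..<N + d}. (1/3::real) ^ n) = 3/2 * ((1/3) ^ N - (1/3) ^ (N + d))" for d
  proof (induction d)
    case (Suc d)
    have "(\<Sum>n\<in>{N..<N + Suc d}. (1/3::real) ^ n) = (\<Sum>n\<in>{N..<N + d}. (1/3) ^ n) + (1/3) ^ (N + d)"
      by (simp add: sum.atLeastLessThan_Suc)
    then show ?case using Suc.IH by simp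
  qed simp
  from this[of "M - N"] True show ?thesis by simp
qed simp

locale scale_setting =
  fixes T \<kappa> :: "nat \<Rightarrow> nat"
  assumes scale: "scale T \<kappa>"
begin

lemma T_pos: "0 < T n"
  using scale unfolding scale_def by blast

lemma T_Suc: "T (Suc n) = T n * \<kappa> (Suc n)"
proof -
  have "\<forall>n\<ge>1. T n = \<kappa> n * T (n - 1)" using scale unfolding scale_def by blast
  then show ?thesis by (simp add: mult.commute)
qed

lemma kappa_Suc_dvd: "3 * \<kappa> n dvd \<kappa> (Suc n)"
proof -
  have "\<forall>n\<ge>1. 3 * \<kappa> (n - 1) dvd \<kappa> n" using scale unfolding scale_def by blast
  then show ?thesis by (metis diff_Suc_1 le_add1 plus_1_eq_Suc)
qed

lemma kappa_pos: "0 < \<kappa> n"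
proof (cases n)
  case 0
  then show ?thesis using scale unfolding scale_def by simp
next
  case (Suc m)
  then show ?thesis using T_pos[of n] T_Suc[of m] by simp
qed

lemma kappa_Suc_ge: "3 * \<kappa> n \<le> \<kappa> (Suc n)"
  using kappa_Suc_dvd kappa_pos by (simp add: dvd_imp_le)

lemma pow_le_kappa: "3 ^ Suc n \<le> \<kappa> n"
proof (induction n)
  case 0
  then show ?case using scale unfolding scale_def by simp
next
  case (Suc n)
  then show ?case using kappa_Suc_ge[of n] by simp
qed

definition mid :: "nat \<Rightarrow> nat" where
  "mid n = \<kappa> (Suc n) div 3"

lemma kappa_Suc_eq_mid: "\<kappa> (Suc n) = 3 * mid n"
  unfolding mid_def using kappa_Suc_dvd[of n] by auto

lemma three_le_mid: "3 \<le> mid n"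
proof -
  have "(3::nat) \<le> 3 ^ Suc n" by simp
  then have "3 * 3 \<le> 3 * \<kappa> n" using pow_le_kappa[of n] by linarith
  then show ?thesis using kappa_Suc_ge[of n] kappa_Suc_eq_mid[of n] by linarith
qed

lemma T_strict_mono: "strict_mono T"
proof (rule strict_mono_Suc_iff[THEN iffD2], intro allI)
  fix n
  have "T n * 1 < T n * \<kappa> (Suc n)"
    using T_pos[of n] three_le_mid[of n] kappa_Suc_eq_mid[of n] by (intro mult_strict_left_mono) auto
  then show "T n < T (Suc n)" by (simp add: T_Suc)
qed

lemma T_dvd_T: "m \<le> n \<Longrightarrow> T m dvd T n"
proof (induction n)
  case (Suc n)
  then show ?case using T_Suc[of n] by (auto simp: le_Suc_eq)
qed simp

definition digit :: "nat \<Rightarrow> nat \<Rightarrow> nat" where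
  "digit n x = x div T n mod \<kappa> (Suc n)"

definition mid_set :: "nat \<Rightarrow> nat set" where
  "mid_set n = {x. digit n x = mid n}"

definition long_tail :: "nat set" where
  "long_tail = (\<Union>n. mid_set n)"

text \<open>Meaningful only for x in the tail: otherwise the maximum is taken over the empty set.\<close>

definition level :: "nat \<Rightarrow> nat" where
  "level x = Max {n. x \<in> mid_set n}"

definition block :: "nat \<Rightarrow> nat set" where
  "block x = reg_interval (T (level x)) (x div T (level x))"

lemma digit_eq: "digit n x = x mod T (Suc n) div T n"
proof -
  have "x mod T (Suc n) = T n * digit n x + x mod T n"
    unfolding digit_def T_Suc by (rule mod_mult2_eq)
  then show ?thesis using T_pos[of n] by simp
qed

lemma mid_set_lower: "x \<in> mid_set n \<Longrightarrow> mid n * T n \<le> x"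
proof -
  assume "x \<in> mid_set n"
  then have "mid n = x div T n mod \<kappa> (Suc n)" unfolding mid_set_def digit_def by simp
  then have "mid n \<le> x div T n" using mod_less_eq_dividend by metis
  then have "mid n * T n \<le> x div T n * T n" by (rule mult_le_mono1)
  also have "\<dots> \<le> x" by (rule div_times_less_eq_dividend)
  finally show ?thesis .
qed

lemma T_Suc_le_mid_set: "x \<in> mid_set n \<Longrightarrow> T (Suc n) \<le> 3 * x"
  using mid_set_lower[of x n] by (simp add: T_Suc kappa_Suc_eq_mid mult.commute)

lemma less_of_mem_mid_set: "x \<in> mid_set n \<Longrightarrow> n < x"
proof -
  assume "x \<in> mid_set n"
  have "n \<le> T n" using T_strict_mono by (rule strict_mono_imp_increasing)
  also have "T n < mid n * T n" using three_le_mid[of n] T_pos[of n] by simp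
  also have "\<dots> \<le> x" using mid_set_lower \<open>x \<in> mid_set n\<close> .
  finally show ?thesis .
qed

lemma zero_not_in_long_tail: "0 \<notin> long_tail"
  unfolding long_tail_def using less_of_mem_mid_set by blast

lemma mid_set_cong: "y div T n = x div T n \<Longrightarrow> y \<in> mid_set n \<longleftrightarrow> x \<in> mid_set n"
  unfolding mid_set_def digit_def by simp

lemma mid_set_periodic: "x \<in> mid_set n \<longleftrightarrow> x mod T (Suc n) \<in> mid_set n"
  unfolding mid_set_def digit_eq by simp

lemma div_T_eq_of_le: "k \<le> n \<Longrightarrow> y div T k = x div T k \<Longrightarrow> y div T n = x div T n"
  using T_dvd_T[of k n] by (auto elim!: dvdE simp: div_mult2_eq)

lemma reg_interval_subset_mid_set:
  "x \<in> mid_set n \<Longrightarrow> k \<le> n \<Longrightarrow> reg_interval (T k) (x div T k) \<subseteq> mid_set n"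
  using mid_set_cong div_T_eq_of_le mem_reg_interval_iff[OF T_pos] by blast

lemma finite_levels: "finite {n. x \<in> mid_set n}"
  by (rule finite_subset[of _ "{..<x}"]) (auto dest: less_of_mem_mid_set)

lemma mem_mid_set_level: "x \<in> long_tail \<Longrightarrow> x \<in> mid_set (level x)"
  unfolding level_def long_tail_def using finite_levels Max_in[of "{n. x \<in> mid_set n}"] by auto

lemma le_level: "x \<in> mid_set n \<Longrightarrow> n \<le> level x"
  unfolding level_def using finite_levels by simp

lemma mem_block: "x \<in> block x"
  unfolding block_def using mem_reg_interval_iff[OF T_pos] by simp

lemma block_subset_long_tail: "x \<in> long_tail \<Longrightarrow> block x \<subseteq> long_tail"
  using reg_interval_subset_mid_set[OF mem_mid_set_level order_refl]
  unfolding block_def long_tail_def by blast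

lemma not_mem_mid_set_below:
  assumes "n < m" and boundary: "y mod T m = 0 \<or> y mod T m = T m - 1"
  shows "y \<notin> mid_set n"
proof -
  have dvd: "T (Suc n) dvd T m" using assms(1) by (intro T_dvd_T) simp
  then have "y mod T (Suc n) = (y mod T m) mod T (Suc n)" by (simp add: mod_mod_cancel)
  then have "y mod T (Suc n) = 0 \<or> y mod T (Suc n) = T (Suc n) - 1"
    using boundary pred_mod_of_dvd[OF T_pos dvd] by auto
  then have "digit n y = 0 \<or> digit n y = \<kappa> (Suc n) - 1"
    unfolding digit_eq T_Suc using pred_mult_div[OF T_pos kappa_pos] by auto
  then show ?thesis
    using three_le_mid[of n] kappa_Suc_eq_mid[of n] unfolding mid_set_def by auto
qed

text \<open>A neighbour y of the block of x has only extreme digits below position level x, a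
  non-middle digit at that position, and the digits of x above it, none of which is middle.\<close>

lemma not_mem_long_tail_of_adjacent:
  assumes x: "x \<in> long_tail"
    and same_parent: "y div T (level x) div \<kappa> (Suc (level x)) = x div T (level x) div \<kappa> (Suc (level x))"
    and other_digit: "y div T (level x) mod \<kappa> (Suc (level x)) \<noteq> mid (level x)"
    and boundary: "y mod T (level x) = 0 \<or> y mod T (level x) = T (level x) - 1"
  shows "y \<notin> long_tail"
proof
  assume "y \<in> long_tail"
  then obtain n where n: "y \<in> mid_set n" unfolding long_tail_def by blast
  consider "n < level x" | "n = level x" | "level x < n" by linarith
  then show False
  proof cases
    case 1
    then show False using not_mem_mid_set_below[OF _ boundary] n by blast
  next
    case 2
    then have "y div T (level x) mod \<kappa> (Suc (level x)) = mid (level x)"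
      using n unfolding mid_set_def digit_def by simp
    with other_digit show False by contradiction
  next
    case 3
    have "y div T (Suc (level x)) = x div T (Suc (level x))"
      unfolding T_Suc div_mult2_eq by (rule same_parent)
    with 3 have "y div T n = x div T n" using div_T_eq_of_le Suc_leI by blast
    then have "x \<in> mid_set n" using mid_set_cong n by blast
    then show False using le_level[of x n] 3 by simp
  qed
qed

lemma component_block:
  assumes x: "x \<in> long_tail"
  shows "component long_tail (block x)"
proof -
  let ?m = "level x"
  let ?P = "T ?m"
  let ?K = "\<kappa> (Suc ?m)"
  let ?j = "x div ?P"
  have "0 < ?P" by (rule T_pos)
  have j: "?j mod ?K = mid ?m"
    using mem_mid_set_level[OF x] unfolding mid_set_def digit_def by simp
  have mid: "0 < mid ?m" "Suc (mid ?m) < ?K"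
    using three_le_mid[of ?m] kappa_Suc_eq_mid[of ?m] by auto
  have left: "?j * ?P = 0 \<or> ?j * ?P - 1 \<notin> long_tail"
  proof (cases "?j = 0")
    case False
    have "(?j * ?P - 1) div ?P = ?j - 1"
      using pred_mult_div[of ?P ?j] False \<open>0 < ?P\<close> by (simp add: mult.commute)
    moreover have "(?j * ?P - 1) mod ?P = ?P - 1"
      using pred_mod_of_dvd[of "?j * ?P" ?P] False \<open>0 < ?P\<close> by simp
    moreover have "(?j - 1) div ?K = ?j div ?K" "(?j - 1) mod ?K \<noteq> mid ?m"
      using pred_div_mod_eq[of ?j ?K] j mid by simp_all
    ultimately show ?thesis using not_mem_long_tail_of_adjacent[OF x, of "?j * ?P - 1"] by simp
  qed simp
  have right: "(?j + 1) * ?P - 1 + 1 \<notin> long_tail"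
  proof -
    have "(?j + 1) * ?P - 1 + 1 = (?j + 1) * ?P" using \<open>0 < ?P\<close> by simp
    moreover have "((?j + 1) * ?P) div ?P = Suc ?j" "((?j + 1) * ?P) mod ?P = 0"
      using \<open>0 < ?P\<close> by simp_all
    moreover have "Suc ?j div ?K = ?j div ?K" "Suc ?j mod ?K \<noteq> mid ?m"
      using Suc_div_mod_eq[of ?j ?K] j mid by simp_all
    ultimately show ?thesis using not_mem_long_tail_of_adjacent[OF x, of "(?j + 1) * ?P"] by simp
  qed
  have "block x = {?j * ?P .. (?j + 1) * ?P - 1}"
    unfolding block_def reg_interval_def by simp
  moreover have "?j * ?P \<le> (?j + 1) * ?P - 1" using \<open>0 < ?P\<close> by simp
  ultimately show ?thesis
    unfolding component_def using left right block_subset_long_tail[OF x] by blast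
qed

lemma component_eq_block: "component long_tail I \<Longrightarrow> x \<in> I \<Longrightarrow> I = block x"
proof -
  assume I: "component long_tail I" and "x \<in> I"
  then have "x \<in> long_tail" unfolding component_def by blast
  then show "I = block x"
    using component_unique[OF I component_block] \<open>x \<in> I\<close> mem_block by blast
qed

lemma adapted_long_tail: "adapted T long_tail"
  unfolding adapted_def
proof (intro conjI ballI allI impI)
  fix x assume "x \<in> long_tail"
  then show "\<exists>I. x \<in> I \<and> component long_tail I" using mem_block component_block by blast
next
  fix I assume I: "component long_tail I"
  then obtain a b where "a \<le> b" "I = {a..b}" unfolding component_def by blast
  then have "I = block a" using component_eq_block[OF I] by simp
  then show "\<exists>n. regular (T n) I" unfolding regular_def block_def by blast
qed

lemma skeleton_long_tail: "skeleton T long_tail p = (\<Union>n\<in>{p..}. mid_set n)"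
proof (intro equalityI subsetI)
  fix y assume "y \<in> skeleton T long_tail p"
  then obtain I k where I: "component long_tail I" "regular (T k) I" "p \<le> k" "y \<in> I"
    unfolding skeleton_def by blast
  then have "y \<in> long_tail" unfolding component_def by blast
  have "I = block y" using component_eq_block I by blast
  moreover obtain i where "I = reg_interval (T k) i" using I(2) unfolding regular_def by blast
  ultimately have "T k = T (level y)"
    unfolding block_def by (metis card_reg_interval T_pos)
  then have "k = level y" using strict_mono_eq[OF T_strict_mono] by blast
  then show "y \<in> (\<Union>n\<in>{p..}. mid_set n)"
    using mem_mid_set_level[OF \<open>y \<in> long_tail\<close>] I(3) by auto
next
  fix y assume "y \<in> (\<Union>n\<in>{p..}. mid_set n)"
  then obtain n where "p \<le> n" "y \<in> mid_set n" by blast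
  then have "y \<in> long_tail" "p \<le> level y" using le_level[of y n] unfolding long_tail_def by auto
  then show "y \<in> skeleton T long_tail p"
    unfolding skeleton_def regular_def block_def
    using component_block mem_block unfolding block_def by blast
qed

lemma reg_interval_Int_mid_set:
  "reg_interval (T (Suc p)) k \<inter> mid_set p = reg_interval (T p) (k * \<kappa> (Suc p) + mid p)"
proof -
  have "mid p < \<kappa> (Suc p)" using kappa_Suc_eq_mid[of p] three_le_mid[of p] by simp
  then have "y div T (Suc p) = k \<and> y div T p mod \<kappa> (Suc p) = mid p \<longleftrightarrow>
      y div T p = k * \<kappa> (Suc p) + mid p" for y
    unfolding T_Suc div_mult2_eq by (rule div_mod_eq_iff)
  then show ?thesis
    unfolding mid_set_def digit_def using mem_reg_interval_iff[OF T_pos] by blast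
qed

lemma reg_interval_Int_skeleton:
  assumes "\<not> reg_interval (T (Suc p)) k \<subseteq> long_tail"
  shows "reg_interval (T (Suc p)) k \<inter> skeleton T long_tail p = reg_interval (T p) (k * \<kappa> (Suc p) + mid p)"
proof -
  have no_higher: "reg_interval (T (Suc p)) k \<inter> mid_set n = {}" if "Suc p \<le> n" for n
  proof (rule ccontr)
    assume "reg_interval (T (Suc p)) k \<inter> mid_set n \<noteq> {}"
    then obtain y where "y \<in> mid_set n" "y div T (Suc p) = k"
      using mem_reg_interval_iff[OF T_pos] by blast
    then have "reg_interval (T (Suc p)) k \<subseteq> long_tail"
      using reg_interval_subset_mid_set[OF _ that] unfolding long_tail_def by blast
    with assms show False ..
  qed
  have "reg_interval (T (Suc p)) k \<inter> skeleton T long_tail p = reg_interval (T (Suc p)) k \<inter> mid_set p"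
  proof (intro equalityI subsetI)
    fix y assume "y \<in> reg_interval (T (Suc p)) k \<inter> skeleton T long_tail p"
    then obtain n where "p \<le> n" "y \<in> mid_set n" "y \<in> reg_interval (T (Suc p)) k"
      unfolding skeleton_long_tail by blast
    moreover from this have "n = p" using no_higher[of n] by (metis Suc_leI disjoint_iff le_neq_implies_less)
    ultimately show "y \<in> reg_interval (T (Suc p)) k \<inter> mid_set p" by simp
  qed (auto simp: skeleton_long_tail)
  then show ?thesis using reg_interval_Int_mid_set by simp
qed

lemma sparsely_long_tail_long_tail: "sparsely_long_tail T \<kappa> long_tail"
  unfolding sparsely_long_tail_def Let_def
proof (intro conjI adapted_long_tail zero_not_in_long_tail allI impI)
  fix n k assume "1 \<le> n" and not_subset: "\<not> reg_interval (T n) k \<subseteq> long_tail"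
  then obtain p where n: "n = Suc p" by (cases n) auto
  define t where "t = T p"
  define c where "c = mid p"
  have "0 < t" "3 \<le> c" unfolding t_def c_def using T_pos three_le_mid by auto
  have Tn: "T n = 3 * c * t" and kappa_n: "\<kappa> n = 3 * c"
    unfolding n t_def c_def T_Suc kappa_Suc_eq_mid by simp_all
  have inter: "reg_interval (T n) k \<inter> skeleton T long_tail (n - 1) = reg_interval t (k * (3 * c) + c)"
    using reg_interval_Int_skeleton[of p k] not_subset unfolding n t_def c_def kappa_Suc_eq_mid by simp
  then have card: "card (skeleton T long_tail (n - 1) \<inter> reg_interval (T n) k) = t"
    using card_reg_interval[OF \<open>0 < t\<close>] by (simp add: Int_commute)
  have third: "T n div 3 = c * t" unfolding Tn by simp
  have "(k * (3 * c) + c) * t = k * T n + T n div 3"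
    unfolding third Tn by (simp add: algebra_simps)
  moreover have "(k * (3 * c) + c + 1) * t - 1 \<le> (k + 1) * T n - 1 - T n div 3"
  proof -
    have "(k * (3 * c) + c + 1) * t = k * T n + c * t + t" "(k + 1) * T n = k * T n + 3 * (c * t)"
      unfolding Tn by (simp_all add: algebra_simps)
    moreover have "t \<le> c * t" using \<open>3 \<le> c\<close> by simp
    ultimately show ?thesis unfolding third by linarith
  qed
  ultimately show "reg_interval (T n) k \<inter> skeleton T long_tail (n - 1)
      \<subseteq> {k * T n + T n div 3..(k + 1) * T n - 1 - T n div 3}"
    by (subst inter) (auto simp: reg_interval_def)
  show "0 < real (card (skeleton T long_tail (n - 1) \<inter> reg_interval (T n) k)) / real (T n)"
    unfolding card using \<open>0 < t\<close> T_pos[of n] by simp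
  show "real (card (skeleton T long_tail (n - 1) \<inter> reg_interval (T n) k)) / real (T n) \<le> 1 / real (\<kappa> n)"
    unfolding card unfolding Tn kappa_n using \<open>0 < t\<close> \<open>3 \<le> c\<close> by simp
qed

definition long_tail_below :: "nat \<Rightarrow> nat set" where
  "long_tail_below N = (\<Union>n<N. mid_set n)"

lemma long_tail_below_periodic: "x \<in> long_tail_below N \<longleftrightarrow> x mod T N \<in> long_tail_below N"
proof -
  have "x \<in> mid_set n \<longleftrightarrow> x mod T N \<in> mid_set n" if "n < N" for n
    using mid_set_periodic[of x n] mid_set_periodic[of "x mod T N" n] T_dvd_T[of "Suc n" N] that
    by (simp add: mod_mod_cancel)
  then show ?thesis unfolding long_tail_below_def by auto
qed

lemma card_mid_set_lessThan_le: "card (mid_set n \<inter> {..<M}) \<le> (M div T (Suc n) + 1) * T n"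
proof -
  let ?Q = "M div T (Suc n)"
  have "mid_set n \<inter> {..<M} \<subseteq> (\<Union>q\<le>?Q. reg_interval (T (Suc n)) q \<inter> mid_set n)"
  proof
    fix y assume y: "y \<in> mid_set n \<inter> {..<M}"
    then have "y div T (Suc n) \<le> ?Q" by (simp add: div_le_mono)
    moreover have "y \<in> reg_interval (T (Suc n)) (y div T (Suc n))"
      using mem_reg_interval_iff[OF T_pos] by simp
    ultimately show "y \<in> (\<Union>q\<le>?Q. reg_interval (T (Suc n)) q \<inter> mid_set n)" using y by blast
  qed
  then have "card (mid_set n \<inter> {..<M}) \<le> card (\<Union>q\<le>?Q. reg_interval (T (Suc n)) q \<inter> mid_set n)"
    by (rule card_mono[rotated]) (simp add: reg_interval_def)
  also have "\<dots> \<le> (\<Sum>q\<le>?Q. card (reg_interval (T (Suc n)) q \<inter> mid_set n))"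
    by (rule card_UN_le) simp
  also have "\<dots> = (?Q + 1) * T n"
    unfolding reg_interval_Int_mid_set using card_reg_interval[OF T_pos] by simp
  finally show ?thesis .
qed

text \<open>A nonempty initial segment reaches the first middle block, so M > T (n + 1) / 3 and the
  block count M div T (n + 1) + 1 is at most 4 M / T (n + 1).\<close>

lemma card_mid_set_le: "real (card (mid_set n \<inter> {..<M})) \<le> 4 * (1/3) ^ (n + 2) * M"
proof (cases "mid_set n \<inter> {..<M} = {}")
  case False
  then obtain x where "x \<in> mid_set n" "x < M" by blast
  then have "T (Suc n) < 3 * M" using T_Suc_le_mid_set[of x n] by linarith
  have "real (card (mid_set n \<inter> {..<M})) \<le> real ((M div T (Suc n) + 1) * T n)"
    using card_mid_set_lessThan_le by (rule of_nat_mono)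
  also have "\<dots> = (real (M div T (Suc n)) + 1) * T n" by (simp add: algebra_simps)
  also have "\<dots> \<le> (M / T (Suc n) + 3 * M / T (Suc n)) * T n"
  proof -
    have "real (M div T (Suc n)) \<le> M / T (Suc n)" by (rule of_nat_div_le_of_nat)
    moreover have "real (T (Suc n)) \<le> real (3 * M)"
      using \<open>T (Suc n) < 3 * M\<close> by (intro of_nat_mono) simp
    then have "1 \<le> 3 * M / T (Suc n)" using T_pos[of "Suc n"] by (simp add: le_divide_eq)
    ultimately show ?thesis by (intro mult_right_mono) auto
  qed
  also have "\<dots> = 4 * M / \<kappa> (Suc n)"
    using T_pos[of n] kappa_pos[of "Suc n"] by (simp add: T_Suc field_simps)
  also have "\<dots> \<le> 4 * M / 3 ^ (n + 2)"
  proof -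
    have "3 ^ (n + 2) \<le> \<kappa> (Suc n)" using pow_le_kappa[of "Suc n"] by simp
    then have "real (3 ^ (n + 2)) \<le> real (\<kappa> (Suc n))" by (rule of_nat_mono)
    then show ?thesis using kappa_pos[of "Suc n"] by (intro divide_left_mono) simp_all
  qed
  also have "\<dots> = 4 * (1/3) ^ (n + 2) * M" by (simp add: power_one_over)
  finally show ?thesis .
qed simp

lemma card_long_tail_diff_below_le:
  "real (card ((long_tail - long_tail_below N) \<inter> {..<M})) \<le> 2/3 * (1/3) ^ N * M"
proof -
  have "(long_tail - long_tail_below N) \<inter> {..<M} \<subseteq> (\<Union>n\<in>{N..<M}. mid_set n \<inter> {..<M})"
  proof
    fix x assume x: "x \<in> (long_tail - long_tail_below N) \<inter> {..<M}"
    then obtain n where n: "x \<in> mid_set n" unfolding long_tail_def by blast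
    with x have "N \<le> n" unfolding long_tail_below_def by (meson UN_I lessThan_iff not_le DiffD2 IntD1)
    moreover have "n < M" using less_of_mem_mid_set[OF n] x by simp
    ultimately show "x \<in> (\<Union>n\<in>{N..<M}. mid_set n \<inter> {..<M})" using n x by auto
  qed
  then have "card ((long_tail - long_tail_below N) \<inter> {..<M}) \<le> card (\<Union>n\<in>{N..<M}. mid_set n \<inter> {..<M})"
    by (rule card_mono[rotated]) simp
  also have "\<dots> \<le> (\<Sum>n\<in>{N..<M}. card (mid_set n \<inter> {..<M}))"
    by (rule card_UN_le) simp
  finally have "real (card ((long_tail - long_tail_below N) \<inter> {..<M}))
      \<le> (\<Sum>n\<in>{N..<M}. real (card (mid_set n \<inter> {..<M})))"
    by (metis of_nat_mono of_nat_sum)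
  also have "\<dots> \<le> (\<Sum>n\<in>{N..<M}. 4 * (1/3) ^ (n + 2) * M)"
    by (rule sum_mono) (rule card_mid_set_le)
  also have "\<dots> = 4/9 * M * (\<Sum>n\<in>{N..<M}. (1/3::real) ^ n)"
    by (simp add: sum_distrib_left power_add mult_ac)
  also have "\<dots> \<le> 4/9 * M * (3/2 * (1/3) ^ N)"
    by (intro mult_left_mono sum_third_powers_le) simp
  finally show ?thesis by (simp add: mult_ac)
qed

lemma periodically_approximable_long_tail: "periodically_approximable long_tail"
  unfolding periodically_approximable_def
proof (intro allI impI)
  fix \<epsilon> :: real assume "0 < \<epsilon>"
  obtain N where N: "(1/3::real) ^ N < \<epsilon>" using real_arch_pow_inv[OF \<open>0 < \<epsilon>\<close>, of "1/3"] by force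
  have "long_tail_below N \<subseteq> long_tail" unfolding long_tail_below_def long_tail_def by blast
  then have sym_diff: "((long_tail - long_tail_below N) \<union> (long_tail_below N - long_tail)) \<inter> {..<M}
      = (long_tail - long_tail_below N) \<inter> {..<M}" for M by blast
  have "2/3 * (1/3::real) ^ N \<le> \<epsilon>" using N zero_le_power[of "1/3::real" N] by linarith
  then have bound: "2/3 * (1/3) ^ N * real M \<le> \<epsilon> * real M" for M by (rule mult_right_mono) simp
  have close: "real (card (((long_tail - long_tail_below N) \<union> (long_tail_below N - long_tail)) \<inter> {..<M}))
      \<le> \<epsilon> * real M" for M
    unfolding sym_diff using card_long_tail_diff_below_le[of N M] bound[of M] by (rule order_trans)
  show "\<exists>P B. 0 < P \<and> (\<forall>x. x \<in> B \<longleftrightarrow> x mod P \<in> B) \<and>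
      (\<forall>M. real (card (((long_tail - B) \<union> (B - long_tail)) \<inter> {..<M})) \<le> \<epsilon> * real M)"
  proof (intro exI[of _ "T N"] exI[of _ "long_tail_below N"] conjI allI)
    show "0 < T N" by (rule T_pos)
    show "x \<in> long_tail_below N \<longleftrightarrow> x mod T N \<in> long_tail_below N" for x
      by (rule long_tail_below_periodic)
  qed (rule close)
qed

lemma density_long_tail: "\<exists>\<delta>. has_density long_tail \<delta> \<and> 0 < \<delta> \<and> \<delta> < 1"
proof -
  obtain \<delta> where \<delta>: "has_density long_tail \<delta>"
    using has_density_of_periodically_approximable periodically_approximable_long_tail by blast
  let ?d0 = "real (card (mid_set 0 \<inter> {..<T 1})) / T 1"
  have "has_density (mid_set 0) ?d0"
    using has_density_periodic[OF T_pos mid_set_periodic] by simp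
  moreover have "real (card (mid_set 0 \<inter> {..<M})) / M \<le> real (card (long_tail \<inter> {..<M})) / M" for M
    unfolding long_tail_def by (intro divide_right_mono of_nat_mono card_mono) auto
  ultimately have "?d0 \<le> \<delta>"
    using \<delta> unfolding has_density_def by (intro LIMSEQ_le) auto
  moreover have "0 < ?d0"
  proof -
    have "mid 0 * T 0 \<in> mid_set 0"
      using kappa_Suc_eq_mid[of 0] three_le_mid[of 0] T_pos[of 0] unfolding mid_set_def digit_def by simp
    moreover have "mid 0 * T 0 < T 1"
      using kappa_Suc_eq_mid[of 0] three_le_mid[of 0] T_pos[of 0] by (simp add: T_Suc)
    ultimately have "0 < card (mid_set 0 \<inter> {..<T 1})" by (auto simp: card_gt_0_iff)
    then show ?thesis using T_pos[of 1] by simp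
  qed
  moreover have "\<delta> \<le> 2/3"
  proof (rule LIMSEQ_le_const2)
    show "(\<lambda>M. real (card (long_tail \<inter> {..<M})) / M) \<longlonglongrightarrow> \<delta>"
      using \<delta> unfolding has_density_def .
    have "real (card (long_tail \<inter> {..<M})) \<le> 2/3 * M" for M
      using card_long_tail_diff_below_le[of 0 M] unfolding long_tail_below_def by simp
    then show "\<exists>N. \<forall>M\<ge>N. real (card (long_tail \<inter> {..<M})) / M \<le> 2/3"
      by (auto simp: divide_le_eq)
  qed
  ultimately show ?thesis using \<delta> by (intro exI[of _ \<delta>]) simp
qed

end

theorem proposition6:
  fixes T \<kappa> :: "nat \<Rightarrow> nat"
  assumes "scale T \<kappa>"
  shows "\<exists>R. sparsely_long_tail T \<kappa> R \<and> rational_nat R \<and>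
           (\<exists>\<delta>. has_density R \<delta> \<and> 0 < \<delta> \<and> \<delta> < 1)"
proof -
  interpret scale_setting T \<kappa> by unfold_locales (rule assms)
  have "rational_nat long_tail"
    using rational_nat_of_periodically_approximable periodically_approximable_long_tail by blast
  then show ?thesis
    using sparsely_long_tail_long_tail density_long_tail by blast
qed

end
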